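(* For every natural number $N$ and every prime number $p$, there exists an integer $m \ge 1$ such that for every $l \in \mathbb{N}$, $$P_{T(2,2lm+1)}(a,N) \equiv a^{2lm} \pmod p \quad\text{and}\quad P_{T(2,-2lm-1)}(a,N) \equiv a^{-2lm} \pmod p.$$
   Context: $P_K(a,z)$ denotes the HOMFLY polynomial of a link $K$, normalised so that the trivial knot has $P=1$ and satisfying $a^{-1} P_{\widehat{\beta \sigma_i^2}} - a P_{\widehat{\beta}} = z P_{\widehat{\beta\sigma_i}}$ for all braids $\beta\in B_n$ and generators $\sigma_i$, where the hat denotes braid closure. For an integer $n$, $T(2,n)$ denotes the torus link obtained as the closure of the braid $\sigma_1^n \in B_2$; for $n$ odd it is a knot, and $T(2,-n)$ is the mirror image of $T(2,n)$. Congruence modulo $p$ of Laurent polynomials means congruence of all coefficients. *)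

theory Defs
  imports "HOL-Computational_Algebra.Formal_Laurent_Series" "HOL-Number_Theory.Cong"
begin

text \<open>Two-variable Laurent polynomials: outer variable a, coefficients are
Laurent polynomials in z (type int fls).\<close>

type_synonym lp2 = "int fls fls"

definition var_a :: lp2 where "var_a = fls_X"
definition var_a_inv :: lp2 where "var_a_inv = fls_X_inv"
definition var_z :: lp2 where "var_z = fls_const fls_X"
definition var_z_inv :: lp2 where "var_z_inv = fls_const fls_X_inv"

text \<open>HOMFLY polynomial of the closure of sigma_1^n in B_2, determined by the
skein relation a^{-1} P_{n+2} - a P_n = z P_{n+1} together with
P_{1} = P_{-1} = 1 (both closures are the trivial knot).
hp k = P_{k-1} (upward), hn k = P_{1-k} (downward).\<close>

definition homfly_unlink2 :: lp2 where
  "homfly_unlink2 = (var_a_inv - var_a) * var_z_inv"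

fun hp :: "nat \<Rightarrow> lp2" where
  "hp 0 = 1"
| "hp (Suc 0) = homfly_unlink2"
| "hp (Suc (Suc k)) = var_a ^ 2 * hp k + var_a * var_z * hp (Suc k)"

fun hn :: "nat \<Rightarrow> lp2" where
  "hn 0 = 1"
| "hn (Suc 0) = homfly_unlink2"
| "hn (Suc (Suc k)) = var_a_inv ^ 2 * hn k - var_a_inv * var_z * hn (Suc k)"

definition homfly_T2 :: "int \<Rightarrow> lp2" where
  "homfly_T2 n = (if n \<ge> -1 then hp (nat (n + 1)) else hn (nat (1 - n)))"

text \<open>Substitution z := N in a Laurent polynomial in z (used only where no
negative powers of z occur).\<close>
definition eval_z :: "nat \<Rightarrow> int fls \<Rightarrow> int" where
  "eval_z N c = (\<Sum>j \<in> {j. fls_nth c j \<noteq> 0}. fls_nth c j * int N ^ nat j)"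

definition homfly_T2_at :: "nat \<Rightarrow> int \<Rightarrow> int \<Rightarrow> int" where
  "homfly_T2_at N n k = eval_z N (fls_nth (homfly_T2 n) k)"

end

theory Submission
  imports Defs "HOL-Computational_Algebra.Polynomial_FPS"
begin

(* By the skein relation the terms E_j = P_{T(2,2j-1)} satisfy
   E_{j+2} = a^2 (2 + z^2) E_{j+1} - a^4 E_j, so
   P_{T(2,2j+1)} = a^{2j} U_{j+1} - a^{2j+2} U_j, where U is the Lucas sequence
   U_0 = 0, U_1 = 1, U_{n+2} = (2 + z^2) U_{n+1} - U_n (and symmetrically with a^{-1}
   for the mirror images). At z = N the pair (U_n, U_{n+1}) modulo p moves by an
   invertible map of a finite set, hence is purely periodic, say with period m; at
   n = l m it is back to (0, 1), leaving only the monomial a^{2lm}. *)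

unbundle fps_syntax

fun lucas_U :: "'a::comm_ring_1 \<Rightarrow> nat \<Rightarrow> 'a" where
  "lucas_U c 0 = 0"
| "lucas_U c (Suc 0) = 1"
| "lucas_U c (Suc (Suc n)) = c * lucas_U c (Suc n) - lucas_U c n"

lemma lucas_U_hom:
  assumes mult: "\<And>x y. h (x * y) = h x * h y"
    and diff: "\<And>x y. h (x - y) = h x - h y"
    and one: "h 1 = 1"
  shows "h (lucas_U c n) = lucas_U (h c) n"
proof (induction n rule: induct_nat_012)
  case 0
  show ?case using diff[of 0 0] by simp
qed (simp_all add: one mult diff)

lemma even_terms_lucas_U:
  fixes s :: "nat \<Rightarrow> 'a::comm_ring_1"
  assumes rec: "\<And>n. s (Suc (Suc n)) = x^2 * s n + x * y * s (Suc n)"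
  shows "s (2*n+2) = x^(2*n) * s 2 * lucas_U (2 + y^2) (n+1)
                   - x^(2*n+2) * s 0 * lucas_U (2 + y^2) n"
proof -
  have even_rec: "s (2*n+4) = x^2 * (2 + y^2) * s (2*n+2) - x^4 * s (2*n)" for n
  proof -
    have s2: "x * y * s (2*n+1) = s (2*n+2) - x^2 * s (2*n)"
      using rec[of "2*n"] by simp
    have "s (2*n+4) = x^2 * s (2*n+2) + x * y * (x^2 * s (2*n+1) + x * y * s (2*n+2))"
      using rec[of "2*n+2"] rec[of "2*n+1"] by (simp add: numeral_eq_Suc)
    also have "\<dots> = x^2 * s (2*n+2) + x^2 * (x * y * s (2*n+1)) + x^2 * y^2 * s (2*n+2)"
      by (simp add: algebra_simps power2_eq_square)
    finally show ?thesis
      unfolding s2 by (simp add: algebra_simps power2_eq_square power4_eq_xxxx)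
  qed
  show ?thesis
  proof (induction n rule: induct_nat_012)
    case 0
    then show ?case by (simp add: numeral_2_eq_2)
  next
    case 1
    then show ?case using even_rec[of 0] by (simp add: eval_nat_numeral algebra_simps)
  next
    case (ge2 n)
    have idx: "2 * Suc (Suc n) + 2 = 2 * Suc n + 4" "2 * Suc n = 2 * n + 2"
      by simp_all
    have "s (2 * Suc (Suc n) + 2) = x^2 * (2 + y^2) * s (2 * Suc n + 2) - x^4 * s (2*n+2)"
      using even_rec[of "Suc n"] by (simp only: idx)
    also have "\<dots> = x^(2 * Suc (Suc n)) * s 2 * lucas_U (2 + y^2) (Suc (Suc n) + 1)
                     - x^(2 * Suc (Suc n) + 2) * s 0 * lucas_U (2 + y^2) (Suc (Suc n))"
      unfolding ge2.IH by (simp add: power_mult power2_eq_square power4_eq_xxxx algebra_simps)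
    finally show ?case .
  qed
qed

lemma linear_recurrence_cong_periodic:
  fixes f :: "nat \<Rightarrow> int" and p :: int
  assumes rec: "\<And>n. f (Suc (Suc n)) = c * f (Suc n) - f n" and "p > 0"
  obtains d where "d > 0" and "\<And>l n. [f (n + l * d) = f n] (mod p)"
proof -
  define agree where
    "agree i j \<longleftrightarrow> [f i = f j] (mod p) \<and> [f (Suc i) = f (Suc j)] (mod p)" for i j
  have agree_trans: "agree i k" if "agree i j" "agree j k" for i j k
    using that unfolding agree_def by (blast intro: cong_trans)
  have agree_Suc: "agree (Suc i) (Suc j) \<longleftrightarrow> agree i j" for i j
  proof
    assume "agree i j"
    then have "[c * f (Suc i) - f i = c * f (Suc j) - f j] (mod p)"
      unfolding agree_def by (intro cong_diff cong_mult cong_refl) auto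
    with \<open>agree i j\<close> show "agree (Suc i) (Suc j)"
      by (simp add: agree_def rec)
  next
    assume "agree (Suc i) (Suc j)"
    then have "[c * f (Suc i) - f (Suc (Suc i)) = c * f (Suc j) - f (Suc (Suc j))] (mod p)"
      unfolding agree_def by (intro cong_diff cong_mult cong_refl) auto
    with \<open>agree (Suc i) (Suc j)\<close> show "agree i j"
      by (simp add: agree_def rec)
  qed
  have agree_shift: "agree (i + n) (j + n) \<longleftrightarrow> agree i j" for i j n
    by (induction n) (simp_all add: agree_Suc)
  define residues where "residues n = (f n mod p, f (Suc n) mod p)" for n
  have "range residues \<subseteq> {0..<p} \<times> {0..<p}"
    using \<open>p > 0\<close> by (auto simp: residues_def)
  then have "finite (range residues)"
    by (rule finite_subset) simp
  then have "\<not> inj residues"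
    using finite_imageD infinite_UNIV_nat by blast
  then obtain i j where "i < j" "residues i = residues j"
    unfolding inj_def by (metis nat_neq_iff)
  then have "agree i j"
    by (simp add: residues_def agree_def cong_def)
  define d where "d = j - i"
  have "agree 0 d"
    using agree_shift[of 0 i d] \<open>agree i j\<close> \<open>i < j\<close> by (simp add: d_def)
  have "agree n (n + l * d)" for l n
  proof (induction l)
    case (Suc l)
    have "agree (n + l * d) (n + Suc l * d)"
      using agree_shift[of 0 "n + l * d" d] \<open>agree 0 d\<close>
      by (simp add: add.commute add.left_commute)
    with Suc.IH show ?case by (rule agree_trans)
  qed (simp add: agree_def)
  moreover have "d > 0"
    using \<open>i < j\<close> by (simp add: d_def)
  ultimately show thesis
    using that by (simp add: agree_def cong_sym)
qed

lemma fls_X_mult_X_inv: "(fls_X :: 'a::comm_ring_1 fls) * fls_X_inv = 1"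
  by (intro fls_eqI) (simp add: fls_X_inv_times_conv_shift)

lemma hp_2: "hp 2 = 1"
proof -
  have "hp 2 = var_a^2 + (var_a * var_a_inv - var_a^2) * (var_z * var_z_inv)"
    by (simp add: numeral_2_eq_2 homfly_unlink2_def algebra_simps power2_eq_square)
  then show ?thesis
    by (simp add: var_a_def var_a_inv_def var_z_def var_z_inv_def fls_X_mult_X_inv)
qed

lemma hn_2: "hn 2 = 1"
proof -
  have "hn 2 = var_a_inv^2 - (var_a_inv^2 - var_a * var_a_inv) * (var_z * var_z_inv)"
    by (simp add: numeral_2_eq_2 homfly_unlink2_def algebra_simps power2_eq_square)
  then show ?thesis
    by (simp add: var_a_def var_a_inv_def var_z_def var_z_inv_def fls_X_mult_X_inv)
qed

lemma hp_even:
  "hp (2*n+2) = var_a^(2*n) * lucas_U (2 + var_z^2) (n+1)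
              - var_a^(2*n+2) * lucas_U (2 + var_z^2) n"
  using even_terms_lucas_U[of hp var_a var_z n]
  by (simp add: hp_2 algebra_simps power2_eq_square)

lemma hn_even:
  "hn (2*n+2) = var_a_inv^(2*n) * lucas_U (2 + var_z^2) (n+1)
              - var_a_inv^(2*n+2) * lucas_U (2 + var_z^2) n"
  using even_terms_lucas_U[of hn var_a_inv "- var_z" n]
  by (simp add: hn_2 algebra_simps power2_eq_square)

definition fls_of_poly :: "'a::comm_ring_1 poly \<Rightarrow> 'a fls" where
  "fls_of_poly q = fps_to_fls (fps_of_poly q)"

lemma fls_of_poly_nth: "fls_of_poly q $$ k = (if k < 0 then 0 else coeff q (nat k))"
  by (simp add: fls_of_poly_def)

lemma lucas_U_var_z:
  "lucas_U (2 + var_z^2) n = fls_const (fls_of_poly (lucas_U [:2, 0, 1:] n))"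
proof -
  have "fls_of_poly [:2, 0, 1:] = (2 + fls_X^2 :: int fls)"
    by (simp add: fls_of_poly_def fps_of_poly_pCons power2_eq_square fls_times_fps_to_fls)
  then have "fls_const (fls_of_poly [:2, 0, 1:]) = 2 + var_z^2"
    by (simp add: var_z_def fls_const_power flip: fls_plus_const)
  then show ?thesis
    by (subst lucas_U_hom[where h = "\<lambda>q. fls_const (fls_of_poly q)"])
       (simp_all add: fls_of_poly_def fps_of_poly_mult fps_of_poly_diff fls_times_fps_to_fls
          fls_minus_const)
qed

lemma eval_z_fls_of_poly: "eval_z N (fls_of_poly q) = poly q (int N)"
proof -
  let ?S = "{i. coeff q i \<noteq> 0}"
  have supp: "{j. fls_of_poly q $$ j \<noteq> 0} = int ` ?S"
    by (auto simp: fls_of_poly_nth image_iff) (metis nat_0_le not_less)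
  have "eval_z N (fls_of_poly q) = (\<Sum>i\<in>?S. coeff q i * int N ^ i)"
    unfolding eval_z_def supp by (subst sum.reindex) (auto simp: fls_of_poly_nth)
  also have "\<dots> = (\<Sum>i\<le>degree q. coeff q i * int N ^ i)"
    by (rule sum.mono_neutral_left) (auto intro: le_degree)
  also have "\<dots> = poly q (int N)"
    by (simp add: poly_altdef)
  finally show ?thesis .
qed

lemma eval_z_zero: "eval_z N 0 = 0"
  by (simp add: eval_z_def)

lemma eval_z_uminus: "eval_z N (- f) = - eval_z N f"
  by (simp add: eval_z_def sum_negf)

lemma eval_z_lucas_U: "eval_z N (fls_of_poly (lucas_U [:2, 0, 1:] n)) = lucas_U (2 + int N^2) n"
  unfolding eval_z_fls_of_poly
  by (subst lucas_U_hom[where h = "\<lambda>q. poly q (int N)"]) (simp_all add: power2_eq_square)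

lemma homfly_T2_pos_odd: "homfly_T2 (2 * int n + 1) = hp (2*n+2)"
proof -
  have "nat (2 * int n + 1 + 1) = 2*n+2"
    by simp
  then show ?thesis
    by (simp add: homfly_T2_def)
qed

lemma homfly_T2_neg_odd: "homfly_T2 (- 2 * int n - 1) = hn (2*n+2)"
proof (cases "n = 0")
  case True
  then show ?thesis
    using hn_2 by (simp add: homfly_T2_def numeral_2_eq_2 del: hn.simps)
next
  case False
  then have "nat (1 - (- 2 * int n - 1)) = 2*n+2"
    by simp
  with False show ?thesis
    by (simp add: homfly_T2_def)
qed

lemma homfly_T2_at_pos_odd:
  "homfly_T2_at N (2 * int n + 1) k =
     (if k = 2 * int n then lucas_U (2 + int N^2) (n+1) else 0)
   - (if k = 2 * int n + 2 then lucas_U (2 + int N^2) n else 0)"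
  unfolding homfly_T2_at_def homfly_T2_pos_odd hp_even lucas_U_var_z var_a_def
    fls_X_power_times_conv_shift(1)
  by (auto simp: eval_z_lucas_U eval_z_uminus eval_z_zero)

lemma homfly_T2_at_neg_odd:
  "homfly_T2_at N (- 2 * int n - 1) k =
     (if k = - 2 * int n then lucas_U (2 + int N^2) (n+1) else 0)
   - (if k = - 2 * int n - 2 then lucas_U (2 + int N^2) n else 0)"
  unfolding homfly_T2_at_def homfly_T2_neg_odd hn_even lucas_U_var_z var_a_inv_def
    fls_X_inv_power_times_conv_shift(1)
  by (auto simp: eval_z_lucas_U eval_z_uminus eval_z_zero)

theorem mainTheorem4:
  fixes N p :: nat
  assumes "prime p"
  shows "\<exists>m::nat. m \<ge> 1 \<and> (\<forall>l::nat.
           (\<forall>k::int. [homfly_T2_at N (2 * int l * int m + 1) k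
                        = (if k = 2 * int l * int m then 1 else 0)] (mod int p)) \<and>
           (\<forall>k::int. [homfly_T2_at N (- 2 * int l * int m - 1) k
                        = (if k = - 2 * int l * int m then 1 else 0)] (mod int p)))"
proof -
  let ?U = "lucas_U (2 + int N^2)"
  obtain m where "m > 0"
    and period: "\<And>l n. [?U (n + l * m) = ?U n] (mod int p)"
    using linear_recurrence_cong_periodic[of ?U "2 + int N^2" "int p"]
      prime_gt_0_nat[OF assms] by auto
  have U0: "int p dvd ?U (l * m)" and U1: "int p dvd ?U (l * m + 1) - 1" for l
    using period[where l = l and n = 0] period[where l = l and n = 1]
    by (simp_all add: cong_iff_dvd_diff add.commute)
  show ?thesis
  proof (intro exI conjI allI)
    show "m \<ge> 1"
      using \<open>m > 0\<close> by simp
    fix l :: nat and k :: int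
    have pos: "2 * int l * int m = 2 * int (l * m)"
      and neg: "- 2 * int l * int m = - 2 * int (l * m)"
      by simp_all
    show "[homfly_T2_at N (2 * int l * int m + 1) k
             = (if k = 2 * int l * int m then 1 else 0)] (mod int p)"
      unfolding pos homfly_T2_at_pos_odd using U0[of l] U1[of l]
      by (auto simp: cong_iff_dvd_diff)
    show "[homfly_T2_at N (- 2 * int l * int m - 1) k
             = (if k = - 2 * int l * int m then 1 else 0)] (mod int p)"
      unfolding neg homfly_T2_at_neg_odd using U0[of l] U1[of l]
      by (auto simp: cong_iff_dvd_diff)
  qed
qed

end
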